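(* Let $n\ge2$, let $X\subset\mathbb{R}^n$ be finite with the Euclidean metric $d$, let $k\in\mathbb{N}$, $Y\subset X$ and $\epsilon>0$. Suppose $p\in C$ for some $C\in\mathcal{D}^*(Y,\epsilon)$ and $x\in Y\setminus C$. Then there exists $a\in(\partial C)^{\mathfrak{n}}_C\subset J(Y,\epsilon)$ such that $\rho^Y(a,x)\le\rho^Y(p,x)$.
   Context: DBSCAN$^*$: for $Y\subset X$, $\mathcal{C}(Y,\epsilon)=\{p\in Y:|\{y\in Y:d(p,y)\le\epsilon\}|>k\}$, $\mathcal{N}(Y,\epsilon)=Y\setminus\mathcal{C}(Y,\epsilon)$, and $\mathcal{D}^*(Y,\epsilon)$ is the set of vertex sets of the connected components of the graph with vertex set $\mathcal{C}(Y,\epsilon)$ and an edge between distinct $p,q$ whenever $d(p,q)\le\epsilon$. For $p\in Y$, $\operatorname{core}^Y_k(p)$ is the distance from $p$ to a $k$-th nearest neighbour of $p$ in $Y$ (the $k$-th smallest value of $d(p,y)$, $y\in Y\setminus\{p\}$, with multiplicity), and $\rho^Y(p,q)=\max\{\operatorname{core}^Y_k(p),\operatorname{core}^Y_k(q),d(p,q)\}$ for $p\neq q$, $\rho^Y(p,p)=0$. Cubes: $\mathcal{Q}=\mathcal{Q}(\epsilon)$ is the collection of closed cubes $\{x\in\mathbb{R}^n: j_i\frac{\epsilon}{2\sqrt n}\le x_i\le (j_i+1)\frac{\epsilon}{2\sqrt n}\}$, $j\in\mathbb{Z}^n$; $S^m=\{x:\max_i|x_i-s_i|\le m\frac{\epsilon}{2\sqrt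 n}\text{ for some }s\in S\}$; $\mathcal{I}(B)=\{S\in\mathcal{Q}:S\cap B\neq\emptyset\}$. For $A\subset X$, $S\in\mathcal{I}(A)$ is an interior cube of $A$ if $S^1\cap X\subset A$ and every $T\in\mathcal{Q}$ with $T\subset S^1$ lies in $\mathcal{I}(A)$, otherwise a boundary cube; $\partial A$ is the union of boundary cubes. For $Z\subset\mathbb{R}^n$ and integer $N\ge0$, $Z^N=\bigcup_{S\in\mathcal{I}(Z)}S^N$ and $Z^N_C=Z^N\cap C$. $\mathfrak{n}$ is the smallest integer with $\mathfrak{n}\ge\sqrt n-1$. $J(Y,\epsilon)=\bigcup_{C\in\mathcal{D}^*(Y,\epsilon)}(\partial C)^{\mathfrak{n}}_C\cup\mathcal{N}(Y,\epsilon)$. *)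

theory Defs
  imports "HOL-Analysis.Analysis" "HOL-Library.Multiset"
begin

definition core_points :: "nat \<Rightarrow> ('a::metric_space) set \<Rightarrow> real \<Rightarrow> 'a set" where
  "core_points k Y eps = {p \<in> Y. k < card {y \<in> Y. dist p y \<le> eps}}"

definition noise_points :: "nat \<Rightarrow> ('a::metric_space) set \<Rightarrow> real \<Rightarrow> 'a set" where
  "noise_points k Y eps = Y - core_points k Y eps"

definition core_edge :: "nat \<Rightarrow> ('a::metric_space) set \<Rightarrow> real \<Rightarrow> 'a \<Rightarrow> 'a \<Rightarrow> bool" where
  "core_edge k Y eps p q \<longleftrightarrow> p \<in> core_points k Y eps \<and> q \<in> core_points k Y eps \<and> p \<noteq> q \<and> dist p q \<le> eps"

definition dbscan_components :: "nat \<Rightarrow> ('a::metric_space) set \<Rightarrow> real \<Rightarrow> 'a set set" where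
  "dbscan_components k Y eps =
     {{q. (core_edge k Y eps)\<^sup>*\<^sup>* p q} | p. p \<in> core_points k Y eps}"

text \<open>k-th smallest value of d(p,y), y in Y - {p}, counted with multiplicity (k >= 1).\<close>
definition core_dist :: "nat \<Rightarrow> ('a::metric_space) set \<Rightarrow> 'a \<Rightarrow> real" where
  "core_dist k Y p =
     sorted_list_of_multiset (image_mset (dist p) (mset_set (Y - {p}))) ! (k - 1)"

definition mreach :: "nat \<Rightarrow> ('a::metric_space) set \<Rightarrow> 'a \<Rightarrow> 'a \<Rightarrow> real" where
  "mreach k Y p q =
     (if p = q then 0 else max (core_dist k Y p) (max (core_dist k Y q) (dist p q)))"

definition side :: "real \<Rightarrow> 'n::finite itself \<Rightarrow> real" where
  "side eps _ = eps / (2 * sqrt (real CARD('n)))"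

definition cube :: "real \<Rightarrow> int ^ 'n::finite \<Rightarrow> (real ^ 'n) set" where
  "cube eps j = {x. \<forall>i. real_of_int (j $ i) * side eps TYPE('n) \<le> x $ i
                        \<and> x $ i \<le> (real_of_int (j $ i) + 1) * side eps TYPE('n)}"

definition cubes :: "real \<Rightarrow> (real ^ 'n::finite) set set" where
  "cubes eps = range (cube eps)"

definition expand :: "real \<Rightarrow> nat \<Rightarrow> (real ^ 'n::finite) set \<Rightarrow> (real ^ 'n) set" where
  "expand eps m S = {x. \<exists>s \<in> S. \<forall>i. \<bar>x $ i - s $ i\<bar> \<le> real m * side eps TYPE('n)}"

definition meeting_cubes :: "real \<Rightarrow> (real ^ 'n::finite) set \<Rightarrow> (real ^ 'n) set set" where
  "meeting_cubes eps B = {S \<in> cubes eps. S \<inter> B \<noteq> {}}"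

definition interior_cube ::
  "(real ^ 'n::finite) set \<Rightarrow> real \<Rightarrow> (real ^ 'n) set \<Rightarrow> (real ^ 'n) set \<Rightarrow> bool" where
  "interior_cube X eps A S \<longleftrightarrow>
     S \<in> meeting_cubes eps A \<and> expand eps 1 S \<inter> X \<subseteq> A \<and>
     (\<forall>T \<in> cubes eps. T \<subseteq> expand eps 1 S \<longrightarrow> T \<in> meeting_cubes eps A)"

definition boundary_cube ::
  "(real ^ 'n::finite) set \<Rightarrow> real \<Rightarrow> (real ^ 'n) set \<Rightarrow> (real ^ 'n) set \<Rightarrow> bool" where
  "boundary_cube X eps A S \<longleftrightarrow> S \<in> meeting_cubes eps A \<and> \<not> interior_cube X eps A S"

definition cube_boundary :: "(real ^ 'n::finite) set \<Rightarrow> real \<Rightarrow> (real ^ 'n) set \<Rightarrow> (real ^ 'n) set" where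
  "cube_boundary X eps A = \<Union> {S. boundary_cube X eps A S}"

definition thicken :: "real \<Rightarrow> nat \<Rightarrow> (real ^ 'n::finite) set \<Rightarrow> (real ^ 'n) set" where
  "thicken eps N Z = (\<Union>S \<in> meeting_cubes eps Z. expand eps N S)"

text \<open>frak n: smallest integer >= sqrt n - 1 (nonnegative since n >= 1)\<close>
definition frak_n :: "'n::finite itself \<Rightarrow> nat" where
  "frak_n _ = nat \<lceil>sqrt (real CARD('n)) - 1\<rceil>"

definition J_set :: "nat \<Rightarrow> (real ^ 'n::finite) set \<Rightarrow> (real ^ 'n) set \<Rightarrow> real \<Rightarrow> (real ^ 'n) set" where
  "J_set k X Y eps =
     (\<Union>C \<in> dbscan_components k Y eps. thicken eps (frak_n TYPE('n)) (cube_boundary X eps C) \<inter> C)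
     \<union> noise_points k Y eps"

end

theory Submission
  imports Defs
begin

text \<open>
  Let a be a point of C closest to x. If a were outside the frak_n-thickening of the cube
  boundary of C, every cube within frak_n + 1 index steps of the cube of a would be an interior
  cube of C; propagating outwards, every cube within frak_n + 2 steps then meets C and contains no
  point of X outside C. So x is farther than (frak_n + 2) side lengths from a, and the point z at
  exactly that distance from a towards x lies in a cube meeting C. A cube has diameter
  sqrt n * side <= (frak_n + 1) * side, so that cube contains a point of C strictly closer to x
  than a, a contradiction.

  As a core point, a has core distance at most eps, whereas rho(p, x) > eps: either x is a core
  point not joined to p, so d(p, x) > eps, or x is noise, so its core distance exceeds eps.
  Together with d(a, x) <= d(p, x) this gives rho(a, x) <= rho(p, x).
\<close>

section \<open>Core distances and mutual reachability\<close>

lemma sorted_nth_le_iff_less_length_filter: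
  fixes xs :: "'a::linorder list"
  assumes "sorted xs" "i < length xs"
  shows "xs ! i \<le> e \<longleftrightarrow> i < length (filter (\<lambda>d. d \<le> e) xs)"
  using assms
proof (induction xs arbitrary: i)
  case (Cons x xs)
  show ?case
  proof (cases "x \<le> e")
    case True
    then show ?thesis using Cons by (cases i) auto
  next
    case False
    with Cons.prems(1) have "\<forall>y \<in> set (x # xs). \<not> y \<le> e" by auto
    then show ?thesis using nth_mem[OF Cons.prems(2)] by auto
  qed
qed simp

lemma core_dist_le_iff:
  fixes Y :: "('a::metric_space) set"
  assumes "finite Y" "1 \<le> k" "k < card Y" "a \<in> Y"
  shows "core_dist k Y a \<le> e \<longleftrightarrow> k \<le> card {y \<in> Y - {a}. dist a y \<le> e}"
proof -
  let ?M = "image_mset (dist a) (mset_set (Y - {a}))"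
  let ?L = "sorted_list_of_multiset ?M"
  have "length ?L = card Y - 1"
    by (metis assms(1,4) card_Diff_singleton mset_sorted_list_of_multiset size_image_mset
        size_mset size_mset_set)
  moreover have "length (filter (\<lambda>d. d \<le> e) ?L) = card {y \<in> Y - {a}. dist a y \<le> e}"
  proof -
    have "length (filter (\<lambda>d. d \<le> e) ?L) = size (filter_mset (\<lambda>d. d \<le> e) ?M)"
      by (metis mset_filter mset_sorted_list_of_multiset size_mset)
    also have "\<dots> = card {y \<in> Y - {a}. dist a y \<le> e}"
      using assms(1) by (simp add: filter_mset_image_mset)
    finally show ?thesis .
  qed
  ultimately show ?thesis
    using sorted_nth_le_iff_less_length_filter[of ?L "k - 1" e] assms(2,3)
    by (auto simp: core_dist_def)
qed

lemma card_closed_ball_minus_centre: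
  fixes Y :: "('a::metric_space) set"
  assumes "finite Y" "a \<in> Y" "0 \<le> eps"
  shows "card {y \<in> Y - {a}. dist a y \<le> eps} = card {y \<in> Y. dist a y \<le> eps} - 1"
proof -
  have "{y \<in> Y - {a}. dist a y \<le> eps} = {y \<in> Y. dist a y \<le> eps} - {a}" by auto
  then show ?thesis using assms by (simp add: card_Diff_singleton)
qed

lemma core_dist_le_if_core_point:
  fixes Y :: "('a::metric_space) set"
  assumes "finite Y" "1 \<le> k" "a \<in> core_points k Y eps"
  shows "core_dist k Y a \<le> eps"
proof -
  have a: "a \<in> Y" and big: "k < card {y \<in> Y. dist a y \<le> eps}"
    using assms(3) by (auto simp: core_points_def)
  then obtain y where "dist a y \<le> eps" by (metis (no_types, lifting) Collect_empty_eq card.empty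
      not_less_zero)
  then have "0 \<le> eps" using zero_le_dist order_trans by blast
  have "k < card Y"
    using big card_mono[OF assms(1), of "{y \<in> Y. dist a y \<le> eps}"] by auto
  moreover have "k \<le> card {y \<in> Y - {a}. dist a y \<le> eps}"
    using card_closed_ball_minus_centre[OF assms(1) a \<open>0 \<le> eps\<close>] big by linarith
  ultimately show ?thesis using core_dist_le_iff assms(1,2) a by blast
qed

lemma eps_less_core_dist_if_noise_point:
  fixes Y :: "('a::metric_space) set"
  assumes "finite Y" "1 \<le> k" "k < card Y" "0 \<le> eps" "x \<in> noise_points k Y eps"
  shows "eps < core_dist k Y x"
proof -
  have x: "x \<in> Y" and small: "card {y \<in> Y. dist x y \<le> eps} \<le> k"
    using assms(5) by (auto simp: noise_points_def core_points_def)
  have "\<not> k \<le> card {y \<in> Y - {x}. dist x y \<le> eps}"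
    using card_closed_ball_minus_centre[OF assms(1) x assms(4)] small assms(2) by linarith
  then show ?thesis using core_dist_le_iff[OF assms(1-3) x] by (meson not_le)
qed

lemma core_edge_rtranclp_core_point:
  assumes "(core_edge k Y eps)\<^sup>*\<^sup>* p q" "p \<in> core_points k Y eps"
  shows "q \<in> core_points k Y eps"
  using assms by (induction rule: rtranclp_induct) (auto simp: core_edge_def)

lemma dbscan_component_subset_core_points:
  assumes "C \<in> dbscan_components k Y eps"
  shows "C \<subseteq> core_points k Y eps"
proof -
  obtain p where "p \<in> core_points k Y eps" "C = {q. (core_edge k Y eps)\<^sup>*\<^sup>* p q}"
    using assms by (auto simp: dbscan_components_def)
  then show ?thesis using core_edge_rtranclp_core_point by blast
qed

lemma dbscan_component_core_edge_closed:
  assumes "C \<in> dbscan_components k Y eps" "p \<in> C" "core_edge k Y eps p q"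
  shows "q \<in> C"
  using assms by (auto simp: dbscan_components_def intro: rtranclp.rtrancl_into_rtrancl)

lemma eps_less_mreach_if_not_in_component:
  fixes Y :: "('a::metric_space) set"
  assumes "finite Y" "1 \<le> k" "0 \<le> eps" "C \<in> dbscan_components k Y eps" "p \<in> C" "x \<in> Y - C"
  shows "eps < mreach k Y p x"
proof -
  have p_core: "p \<in> core_points k Y eps"
    using assms(4,5) dbscan_component_subset_core_points by blast
  have "p \<noteq> x" using assms(5,6) by blast
  show ?thesis
  proof (cases "x \<in> core_points k Y eps")
    case True
    have "\<not> core_edge k Y eps p x"
      using dbscan_component_core_edge_closed assms(4-6) by blast
    with True p_core \<open>p \<noteq> x\<close> have "eps < dist p x" by (auto simp: core_edge_def)
    then show ?thesis using \<open>p \<noteq> x\<close> by (simp add: mreach_def)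
  next
    case False
    have "k < card Y"
      using p_core card_mono[OF assms(1), of "{y \<in> Y. dist p y \<le> eps}"]
      by (fastforce simp: core_points_def)
    moreover have "x \<in> noise_points k Y eps" using False assms(6) by (simp add: noise_points_def)
    ultimately have "eps < core_dist k Y x"
      using eps_less_core_dist_if_noise_point assms(1-3) by blast
    then show ?thesis using \<open>p \<noteq> x\<close> by (simp add: mreach_def)
  qed
qed

lemma mreach_le_if_core_point_closer:
  fixes Y :: "('a::metric_space) set"
  assumes "finite Y" "1 \<le> k" "a \<in> core_points k Y eps" "a \<noteq> x"
    and "dist a x \<le> dist p x" "eps < mreach k Y p x"
  shows "mreach k Y a x \<le> mreach k Y p x"
proof -
  have "core_dist k Y a \<le> eps" using assms(1-3) by (rule core_dist_le_if_core_point)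
  with assms(4-6) show ?thesis by (auto simp: mreach_def split: if_splits)
qed

section \<open>Cube geometry\<close>

lemma side_pos: "0 < eps \<Longrightarrow> 0 < side eps TYPE('n::finite)"
  by (simp add: side_def)

lemma mem_cube_iff:
  fixes y :: "real ^ 'n::finite"
  shows "y \<in> cube eps j \<longleftrightarrow> (\<forall>i. of_int (j $ i) * side eps TYPE('n) \<le> y $ i
                              \<and> y $ i \<le> (of_int (j $ i) + 1) * side eps TYPE('n))"
  by (simp add: cube_def)

lemma cube_in_cubes: "cube eps j \<in> cubes eps"
  by (simp add: cubes_def)

definition cube_index :: "real \<Rightarrow> real ^ 'n::finite \<Rightarrow> int ^ 'n" where
  "cube_index eps y = (\<chi> i. \<lfloor>y $ i / side eps TYPE('n)\<rfloor>)"

lemma mem_cube_cube_index: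
  fixes y :: "real ^ 'n::finite"
  assumes "0 < eps"
  shows "y \<in> cube eps (cube_index eps y)"
  using floor_divide_lower floor_divide_upper[THEN less_imp_le] side_pos[OF assms, where 'n='n]
  by (auto simp: mem_cube_iff cube_index_def)

lemma floor_diff_abs_le:
  fixes u v :: real
  assumes "\<bar>u - v\<bar> \<le> real m"
  shows "\<bar>\<lfloor>u\<rfloor> - \<lfloor>v\<rfloor>\<bar> \<le> int m"
proof -
  have "\<lfloor>u\<rfloor> < \<lfloor>v\<rfloor> + int m + 1" "\<lfloor>v\<rfloor> < \<lfloor>u\<rfloor> + int m + 1"
    using assms by linarith+
  then show ?thesis by linarith
qed

lemma cube_index_diff_le:
  fixes y a :: "real ^ 'n::finite"
  assumes "0 < eps" "dist y a \<le> real m * side eps TYPE('n)"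
  shows "\<bar>cube_index eps y $ i - cube_index eps a $ i\<bar> \<le> int m"
proof -
  let ?s = "side eps TYPE('n)"
  have s: "0 < ?s" using assms(1) by (rule side_pos)
  have "\<bar>y $ i - a $ i\<bar> \<le> real m * ?s"
    using dist_vec_nth_le[of y i a] assms(2) by (simp add: dist_real_def)
  then have "\<bar>y $ i / ?s - a $ i / ?s\<bar> \<le> real m"
    using s by (simp add: pos_divide_le_eq flip: diff_divide_distrib)
  then show ?thesis by (simp add: cube_index_def floor_diff_abs_le)
qed

lemma dist_le_in_cube:
  fixes w z :: "real ^ 'n::finite"
  assumes "0 < eps" "w \<in> cube eps j" "z \<in> cube eps j"
  shows "dist w z \<le> sqrt (real CARD('n)) * side eps TYPE('n)"
proof -
  let ?s = "side eps TYPE('n)"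
  have "\<bar>w $ i - z $ i\<bar> \<le> ?s" for i
  proof -
    have "(of_int (j $ i) + 1) * ?s = of_int (j $ i) * ?s + ?s" by (simp add: algebra_simps)
    moreover have "of_int (j $ i) * ?s \<le> w $ i" "w $ i \<le> (of_int (j $ i) + 1) * ?s"
      "of_int (j $ i) * ?s \<le> z $ i" "z $ i \<le> (of_int (j $ i) + 1) * ?s"
      using assms(2,3) by (auto simp: mem_cube_iff)
    ultimately show ?thesis by linarith
  qed
  then have "L2_set (\<lambda>i. norm ((w - z) $ i)) UNIV \<le> L2_set (\<lambda>i. ?s) (UNIV :: 'n set)"
    by (intro L2_set_mono) auto
  then have "norm (w - z) \<le> L2_set (\<lambda>i. ?s) (UNIV :: 'n set)"
    by (simp add: norm_vec_def)
  then show ?thesis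
    using side_pos[OF assms(1), where 'n='n] by (simp add: dist_norm L2_set_constant)
qed

lemma abs_diff_clamp_le:
  fixes y l l' s m :: real
  assumes "l' \<le> y" "y \<le> l' + s" "\<bar>l' - l\<bar> \<le> m" "0 \<le> m" "0 \<le> s"
  shows "\<bar>y - max l (min (l + s) y)\<bar> \<le> m"
  using assms unfolding abs_le_iff max_def min_def by (split if_split)+ linarith

lemma cube_subset_expand:
  fixes j j' :: "int ^ 'n::finite"
  assumes "0 < eps" "\<forall>i. \<bar>j' $ i - j $ i\<bar> \<le> int m"
  shows "cube eps j' \<subseteq> expand eps m (cube eps j)"
proof
  fix y assume y: "y \<in> cube eps j'"
  let ?s = "side eps TYPE('n)"
  have s: "0 < ?s" using assms(1) by (rule side_pos)
  define q where "q = (\<chi> i. max (of_int (j $ i) * ?s) (min (of_int (j $ i) * ?s + ?s) (y $ i)))"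
  have "q \<in> cube eps j" using s by (simp add: mem_cube_iff q_def distrib_right)
  moreover have "\<bar>y $ i - q $ i\<bar> \<le> real m * ?s" for i
  proof -
    have "\<bar>of_int (j' $ i) * ?s - of_int (j $ i) * ?s\<bar> = of_int \<bar>j' $ i - j $ i\<bar> * ?s"
      using s by (simp add: abs_mult flip: left_diff_distrib)
    also have "\<dots> \<le> real m * ?s"
      using assms(2)[rule_format, of i] less_imp_le[OF s]
      by (metis mult_right_mono of_int_le_iff of_int_of_nat_eq)
    finally show ?thesis
      unfolding q_def vec_lambda_beta using y s
      by (intro abs_diff_clamp_le) (auto simp: mem_cube_iff distrib_right)
  qed
  ultimately show "y \<in> expand eps m (cube eps j)" by (auto simp: expand_def)
qed

lemma cube_inter_cube_nonempty:
  fixes j j' :: "int ^ 'n::finite"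
  assumes "0 < eps" "\<forall>i. \<bar>j' $ i - j $ i\<bar> \<le> 1"
  shows "cube eps j \<inter> cube eps j' \<noteq> {}"
proof -
  let ?s = "side eps TYPE('n)"
  have s: "0 < ?s" using assms(1) by (rule side_pos)
  define q :: "real ^ 'n" where "q = (\<chi> i. of_int (max (j $ i) (j' $ i)) * ?s)"
  have "of_int (max (j $ i) (j' $ i)) \<le> of_int (j $ i) + (1::real)"
       "of_int (max (j $ i) (j' $ i)) \<le> of_int (j' $ i) + (1::real)" for i
    using assms(2)[rule_format, of i] by (auto simp: abs_le_iff)
  then have "q $ i \<le> (of_int (j $ i) + 1) * ?s" "q $ i \<le> (of_int (j' $ i) + 1) * ?s" for i
    unfolding q_def vec_lambda_beta using less_imp_le[OF s] by (simp_all add: mult_right_mono)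
  moreover have "of_int (j $ i) * ?s \<le> q $ i" "of_int (j' $ i) * ?s \<le> q $ i" for i
    unfolding q_def vec_lambda_beta using less_imp_le[OF s] by (simp_all add: mult_right_mono)
  ultimately have "q \<in> cube eps j \<inter> cube eps j'" by (simp add: mem_cube_iff)
  then show ?thesis by blast
qed

definition step_toward :: "int ^ 'n::finite \<Rightarrow> int ^ 'n \<Rightarrow> int ^ 'n" where
  "step_toward j0 j = (\<chi> i. j $ i - sgn (j $ i - j0 $ i))"

lemma step_toward_closer:
  assumes "\<bar>j $ i - j0 $ i\<bar> \<le> int (Suc d)"
  shows "\<bar>step_toward j0 j $ i - j0 $ i\<bar> \<le> int d"
  using assms by (auto simp: step_toward_def sgn_if abs_le_iff)

lemma step_toward_adjacent: "\<bar>j $ i - step_toward j0 j $ i\<bar> \<le> 1"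
  by (simp add: step_toward_def abs_sgn_eq)

section \<open>Points of a component closest to an outside point\<close>

lemma not_boundary_cube_near:
  fixes j j0 :: "int ^ 'n::finite"
  assumes eps: "0 < eps" and "a \<in> cube eps j0" and "a \<notin> thicken eps N (cube_boundary X eps C)"
    and near: "\<forall>i. \<bar>j $ i - j0 $ i\<bar> \<le> int (Suc N)"
  shows "\<not> boundary_cube X eps C (cube eps j)"
proof
  assume "boundary_cube X eps C (cube eps j)"
  then have "cube eps j \<subseteq> cube_boundary X eps C" by (auto simp: cube_boundary_def)
  moreover define jb where "jb = step_toward j0 j"
  moreover have "cube eps jb \<inter> cube eps j \<noteq> {}"
    by (rule cube_inter_cube_nonempty[OF eps]) (simp add: jb_def step_toward_adjacent)
  ultimately have "cube eps jb \<in> meeting_cubes eps (cube_boundary X eps C)"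
    by (auto simp: meeting_cubes_def cube_in_cubes)
  moreover have "\<bar>j0 $ i - jb $ i\<bar> \<le> int N" for i
    using step_toward_closer[of j i j0 N] near by (subst abs_minus_commute) (simp add: jb_def)
  then have "a \<in> expand eps N (cube eps jb)"
    using cube_subset_expand[OF eps, where j'=j0 and j=jb and m=N] assms(2) by blast
  ultimately show False
    using assms(3) by (auto simp: thicken_def)
qed

lemma cubes_near_meet_if_interior:
  fixes j j0 :: "int ^ 'n::finite"
  assumes eps: "0 < eps" and "a \<in> C" "a \<in> cube eps j0"
    and interior: "\<And>j. \<forall>i. \<bar>j $ i - j0 $ i\<bar> \<le> int D \<Longrightarrow> cube eps j \<in> meeting_cubes eps C
                      \<Longrightarrow> interior_cube X eps C (cube eps j)"
    and "\<forall>i. \<bar>j $ i - j0 $ i\<bar> \<le> int d" "d \<le> Suc D"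
  shows "cube eps j \<in> meeting_cubes eps C"
  using assms(5,6)
proof (induction d arbitrary: j)
  case 0
  then have "j = j0" by (simp add: vec_eq_iff)
  then show ?case using assms(2,3) by (auto simp: meeting_cubes_def cube_in_cubes)
next
  case (Suc d)
  define jb where "jb = step_toward j0 j"
  have jb_near: "\<forall>i. \<bar>jb $ i - j0 $ i\<bar> \<le> int d"
    using Suc.prems(1) step_toward_closer jb_def by blast
  then have "cube eps jb \<in> meeting_cubes eps C" using Suc by simp
  moreover have "int d \<le> int D" using Suc.prems(2) by simp
  then have "\<forall>i. \<bar>jb $ i - j0 $ i\<bar> \<le> int D" using jb_near by (blast intro: order_trans)
  ultimately have "interior_cube X eps C (cube eps jb)" using interior by blast
  moreover have "cube eps j \<subseteq> expand eps 1 (cube eps jb)"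
    by (rule cube_subset_expand[OF eps]) (simp add: jb_def step_toward_adjacent)
  ultimately show ?case by (auto simp: interior_cube_def cube_in_cubes)
qed

lemma cubes_near_inside_if_interior:
  fixes j j0 :: "int ^ 'n::finite"
  assumes eps: "0 < eps" and "a \<in> C" "a \<in> cube eps j0"
    and interior: "\<And>j. \<forall>i. \<bar>j $ i - j0 $ i\<bar> \<le> int D \<Longrightarrow> cube eps j \<in> meeting_cubes eps C
                      \<Longrightarrow> interior_cube X eps C (cube eps j)"
    and near: "\<forall>i. \<bar>j $ i - j0 $ i\<bar> \<le> int (Suc D)"
  shows "cube eps j \<inter> X \<subseteq> C"
proof -
  define jb where "jb = step_toward j0 j"
  have jb_near: "\<forall>i. \<bar>jb $ i - j0 $ i\<bar> \<le> int D"
    using near step_toward_closer jb_def by blast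
  then have "cube eps jb \<in> meeting_cubes eps C"
    using cubes_near_meet_if_interior[OF assms(1-4) jb_near] by simp
  then have "interior_cube X eps C (cube eps jb)" using interior jb_near by blast
  moreover have "cube eps j \<subseteq> expand eps 1 (cube eps jb)"
    by (rule cube_subset_expand[OF eps]) (simp add: jb_def step_toward_adjacent)
  ultimately show ?thesis by (auto simp: interior_cube_def)
qed

lemma exists_closer_point_if_cubes_near_inside:
  fixes C X :: "(real ^ 'n::finite) set"
  assumes eps: "0 < eps" and "a \<in> C" "x \<in> X" "x \<notin> C" "sqrt (real CARD('n)) < real D"
    and near: "\<And>j. \<forall>i. \<bar>j $ i - cube_index eps a $ i\<bar> \<le> int D
                 \<Longrightarrow> cube eps j \<in> meeting_cubes eps C \<and> cube eps j \<inter> X \<subseteq> C"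
  shows "\<exists>w\<in>C. dist w x < dist a x"
proof -
  let ?s = "side eps TYPE('n)"
  have s: "0 < ?s" using eps by (rule side_pos)
  define t where "t = real D * ?s"
  define r where "r = dist a x"
  have "t < r"
  proof (rule ccontr)
    assume "\<not> t < r"
    then have "dist x a \<le> real D * ?s" by (simp add: t_def r_def dist_commute)
    then have "\<forall>i. \<bar>cube_index eps x $ i - cube_index eps a $ i\<bar> \<le> int D"
      using cube_index_diff_le[OF eps] by blast
    then have "cube eps (cube_index eps x) \<inter> X \<subseteq> C" using near by blast
    then show False using mem_cube_cube_index[OF eps] assms(3,4) by blast
  qed
  have "0 < real D" using assms(5) real_sqrt_ge_zero[of "real CARD('n)"] by linarith
  then have "0 < t" using s by (simp add: t_def)
  then have "a \<noteq> x" using \<open>t < r\<close> by (auto simp: r_def)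
  define z where "z = a + (t / r) *\<^sub>R (x - a)"
  have "dist z a = t"
    using \<open>t < r\<close> \<open>0 < t\<close> \<open>a \<noteq> x\<close> by (simp add: z_def r_def dist_norm norm_minus_commute)
  have "x - z = (1 - t / r) *\<^sub>R (x - a)" by (simp add: z_def algebra_simps)
  moreover have "t / r < 1" using \<open>t < r\<close> \<open>0 < t\<close> by simp
  ultimately have "dist z x = (1 - t / r) * r"
    using \<open>t < r\<close> \<open>0 < t\<close> by (simp add: r_def dist_norm norm_minus_commute)
  also have "\<dots> = r - t" using \<open>t < r\<close> \<open>0 < t\<close> by (simp add: field_simps)
  finally have "dist z x = r - t" .
  have "\<forall>i. \<bar>cube_index eps z $ i - cube_index eps a $ i\<bar> \<le> int D"
    using cube_index_diff_le[OF eps, of z a D] \<open>dist z a = t\<close> by (simp add: t_def)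
  then have "cube eps (cube_index eps z) \<in> meeting_cubes eps C" using near by blast
  then obtain w where "w \<in> C" and w: "w \<in> cube eps (cube_index eps z)"
    by (auto simp: meeting_cubes_def)
  have "dist w z \<le> sqrt (real CARD('n)) * ?s"
    using dist_le_in_cube[OF eps w mem_cube_cube_index[OF eps]] .
  also have "\<dots> < t"
    using s assms(5) by (simp add: t_def)
  finally have "dist w x < r"
    using dist_triangle[of w x z] \<open>dist z x = r - t\<close> by linarith
  then show ?thesis using \<open>w \<in> C\<close> r_def by blast
qed

lemma closest_point_mem_thicken_boundary:
  fixes C X :: "(real ^ 'n::finite) set"
  assumes eps: "0 < eps" and "a \<in> C" "x \<in> X" "x \<notin> C"
    and "sqrt (real CARD('n)) \<le> real (Suc N)"
    and closest: "\<forall>c\<in>C. dist a x \<le> dist c x"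
  shows "a \<in> thicken eps N (cube_boundary X eps C)"
proof (rule ccontr)
  assume not_thick: "a \<notin> thicken eps N (cube_boundary X eps C)"
  define j0 where "j0 = cube_index eps a"
  have a0: "a \<in> cube eps j0" using mem_cube_cube_index[OF eps] by (simp add: j0_def)
  have interior: "interior_cube X eps C (cube eps j)"
    if "\<forall>i. \<bar>j $ i - j0 $ i\<bar> \<le> int (Suc N)" "cube eps j \<in> meeting_cubes eps C" for j
    using not_boundary_cube_near[OF eps a0 not_thick that(1)] that(2) by (simp add: boundary_cube_def)
  have "cube eps j \<in> meeting_cubes eps C \<and> cube eps j \<inter> X \<subseteq> C"
    if near: "\<forall>i. \<bar>j $ i - j0 $ i\<bar> \<le> int (Suc (Suc N))" for j
    using cubes_near_meet_if_interior[OF eps \<open>a \<in> C\<close> a0 interior near order_refl]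
      cubes_near_inside_if_interior[OF eps \<open>a \<in> C\<close> a0 interior near] by blast
  moreover have "sqrt (real CARD('n)) < real (Suc (Suc N))" using assms(5) by simp
  ultimately obtain w where "w \<in> C" "dist w x < dist a x"
    using exists_closer_point_if_cubes_near_inside[OF eps \<open>a \<in> C\<close> assms(3,4)] j0_def by blast
  then show False using closest by (meson not_le)
qed

lemma sqrt_card_le_Suc_frak_n: "sqrt (real CARD('n)) \<le> real (Suc (frak_n TYPE('n::finite)))"
proof -
  have "1 \<le> sqrt (real CARD('n))" by simp
  then have "0 \<le> \<lceil>sqrt (real CARD('n)) - 1\<rceil>" by linarith
  then show ?thesis by (simp add: frak_n_def)
qed

theorem corollary5p5:
  fixes X Y C :: "(real ^ 'n::finite) set" and k :: nat and eps :: real and p x :: "real ^ 'n"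
  assumes "CARD('n) \<ge> 2"
    and "finite X" and "Y \<subseteq> X" and "k \<ge> 1" and "eps > 0"
    and "C \<in> dbscan_components k Y eps" and "p \<in> C" and "x \<in> Y - C"
  shows "thicken eps (frak_n TYPE('n)) (cube_boundary X eps C) \<inter> C \<subseteq> J_set k X Y eps
       \<and> (\<exists>a \<in> thicken eps (frak_n TYPE('n)) (cube_boundary X eps C) \<inter> C.
             mreach k Y a x \<le> mreach k Y p x)"
proof
  let ?T = "thicken eps (frak_n TYPE('n)) (cube_boundary X eps C)"
  show "?T \<inter> C \<subseteq> J_set k X Y eps" using assms(6) by (auto simp: J_set_def)
  have "finite Y" using assms(2,3) finite_subset by blast
  have C_core: "C \<subseteq> core_points k Y eps"
    using assms(6) by (rule dbscan_component_subset_core_points)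
  then have "C \<subseteq> Y" by (auto simp: core_points_def)
  then have "finite C" using \<open>finite Y\<close> by (rule finite_subset)
  define a where "a = arg_min_on (\<lambda>c. dist c x) C"
  have "a \<in> C" and closest: "\<forall>c\<in>C. dist a x \<le> dist c x"
    using arg_min_if_finite[OF \<open>finite C\<close>, of "\<lambda>c. dist c x"] assms(7) a_def
    by (auto simp: not_less)
  have "a \<in> ?T"
    using closest_point_mem_thicken_boundary[OF assms(5) \<open>a \<in> C\<close> _ _
        sqrt_card_le_Suc_frak_n closest] assms(3,8) by blast
  moreover have "mreach k Y a x \<le> mreach k Y p x"
  proof (rule mreach_le_if_core_point_closer[OF \<open>finite Y\<close> assms(4)])
    show "a \<in> core_points k Y eps" using C_core \<open>a \<in> C\<close> by blast
    show "a \<noteq> x" using \<open>a \<in> C\<close> assms(8) by blast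
    show "dist a x \<le> dist p x" using closest assms(7) by blast
    show "eps < mreach k Y p x"
      using eps_less_mreach_if_not_in_component[OF \<open>finite Y\<close> assms(4) _ assms(6-8)] assms(5)
      by simp
  qed
  ultimately show "\<exists>a \<in> ?T \<inter> C. mreach k Y a x \<le> mreach k Y p x" using \<open>a \<in> C\<close> by blast
qed

end
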